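(* Let $\mathcal{A}=(Q,(Q_n,Q_p),T,P)$ be a strongly connected $d$-dimensional VASS MDP, let $\mathbf{x}$ be a maximal solution of constraint system (I) and $(\mathbf{y},\mathbf{z})$ a maximal solution of constraint system (II). Then for every counter $c\in\{1,\dots,d\}$, either $\mathbf{y}(c)>0$ or $\sum_{t\in T}\mathbf{x}(t)\mathbf{u}_t(c)>0$. Moreover, for every transition $t=(p,\mathbf{u},q)\in T$: if $p\in Q_n$ then either $\mathbf{z}(q)-\mathbf{z}(p)+\sum_{i=1}^d\mathbf{u}(i)\mathbf{y}(i)<0$ or $\mathbf{x}(t)>0$; and if $p\in Q_p$ then either $\sum_{t'=(p,\mathbf{u}',q')\in\mathit{Out}(p)}P(t')\big(\mathbf{z}(q')-\mathbf{z}(p)+\sum_{i=1}^d\mathbf{u}'(i)\mathbf{y}(i)\big)<0$ or $\mathbf{x}(t)>0$.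
   Context: A $d$-dimensional VASS MDP is a tuple $\mathcal{A}=(Q,(Q_n,Q_p),T,P)$: $Q$ finite nonempty set of states partitioned into nondeterministic states $Q_n$ and probabilistic states $Q_p$; $T\subseteq Q\times\mathbb{Z}^d\times Q$ a finite set of transitions such that every $p\in Q$ has a nonempty set $\mathit{Out}(p)$ of outgoing transitions $(p,\mathbf{u},q)$; $P$ assigns to each $t\in\mathit{Out}(p)$ with $p\in Q_p$ a positive rational probability, summing to $1$ over $\mathit{Out}(p)$. $\mathit{In}(p)$ is the set of transitions of the form $(q,\mathbf{u},p)$, and $\mathbf{u}_t$ is the update vector of $t$. $\mathcal{A}$ is strongly connected if its underlying directed graph is strongly connected. Constraint system (I): find $\mathbf{x}\in\mathbb{Z}^T$ with $\sum_{t\in T}\mathbf{x}(t)\mathbf{u}_t\ge\vec{0}$ (componentwise), $\mathbf{x}\ge\vec{0}$, $\sum_{t\in\mathit{Out}(p)}\mathbf{x}(t)=\sum_{t\in\mathit{In}(p)}\mathbf{x}(t)$ for every $p\in Q$, and $\mathbf{x}(t)=P(t)\cdot\sum_{t'\in\mathit{Out}(p)}\mathbf{x}(t')$ for every $p\in Q_p$ and $t\in\mathit{Out}(p)$. Its objective inequalities are $\sum_{t\in T}\mathbf{x}(t)\mathbf{u}_t(c)>0$ for each counter $c$ and $\mathbf{x}(t)>0$ for each $t\in T$. Constraint system (II): find $\mathbf{y}\in\mathbb{Z}^d$, $\mathbf{z}\in\mathbb{Z}^Q$ with $\mathbf{y}\ge\vec 0$, $\mathbf{z}\ge\vec 0$,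 $\mathbf{z}(q)-\mathbf{z}(p)+\sum_{i=1}^d\mathbf{u}(i)\mathbf{y}(i)\le 0$ for every $(p,\mathbf{u},q)\in T$ with $p\in Q_n$, and $\sum_{t=(p,\mathbf{u},q)\in\mathit{Out}(p)}P(t)\big(\mathbf{z}(q)-\mathbf{z}(p)+\sum_{i=1}^d\mathbf{u}_t(i)\mathbf{y}(i)\big)\le 0$ for every $p\in Q_p$. Its objective inequalities are $\mathbf{y}(c)>0$ for each counter $c$, $\mathbf{z}(q)-\mathbf{z}(p)+\sum_i\mathbf{u}(i)\mathbf{y}(i)<0$ for each $(p,\mathbf{u},q)\in T$ with $p\in Q_n$, and the strict version of the probabilistic inequality for each $p\in Q_p$. Solutions of each system are closed under addition; a solution is maximal if every objective inequality that is satisfied (strictly) by some solution of the system is satisfied by it. *)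

theory Defs
  imports Complex_Main
begin

text \<open>A transition is a triple (p, u, q); update vectors in Z^d are represented as
  functions nat => int whose relevant components are 1..d (all others are required to be 0).\<close>

type_synonym 'q trans = "'q \<times> (nat \<Rightarrow> int) \<times> 'q"

definition src :: "'q trans \<Rightarrow> 'q" where "src t = fst t"
definition upd :: "'q trans \<Rightarrow> nat \<Rightarrow> int" where "upd t = fst (snd t)"
definition tgt :: "'q trans \<Rightarrow> 'q" where "tgt t = snd (snd t)"

definition Out :: "'q trans set \<Rightarrow> 'q \<Rightarrow> 'q trans set" where
  "Out T p = {t \<in> T. src t = p}"
definition In :: "'q trans set \<Rightarrow> 'q \<Rightarrow> 'q trans set" where
  "In T p = {t \<in> T. tgt t = p}"

definition vass_mdp ::
  "nat \<Rightarrow> 'q set \<Rightarrow> 'q set \<Rightarrow> 'q set \<Rightarrow> 'q trans set \<Rightarrow> ('q trans \<Rightarrow> rat) \<Rightarrow> bool" where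
  "vass_mdp d Q Qn Qp T P \<longleftrightarrow>
     finite Q \<and> Q \<noteq> {} \<and> Qn \<union> Qp = Q \<and> Qn \<inter> Qp = {} \<and>
     finite T \<and> (\<forall>t\<in>T. src t \<in> Q \<and> tgt t \<in> Q) \<and>
     (\<forall>t\<in>T. \<forall>i. i \<notin> {1..d} \<longrightarrow> upd t i = 0) \<and>
     (\<forall>p\<in>Q. Out T p \<noteq> {}) \<and>
     (\<forall>p\<in>Qp. (\<forall>t\<in>Out T p. P t > 0) \<and> (\<Sum>t\<in>Out T p. P t) = 1)"

definition strongly_connected :: "'q set \<Rightarrow> 'q trans set \<Rightarrow> bool" where
  "strongly_connected Q T \<longleftrightarrow>
     (\<forall>p\<in>Q. \<forall>q\<in>Q. (p, q) \<in> {(src t, tgt t) | t. t \<in> T}\<^sup>*)"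

definition sol_I ::
  "nat \<Rightarrow> 'q set \<Rightarrow> 'q set \<Rightarrow> 'q trans set \<Rightarrow> ('q trans \<Rightarrow> rat) \<Rightarrow> ('q trans \<Rightarrow> int) \<Rightarrow> bool" where
  "sol_I d Q Qp T P x \<longleftrightarrow>
     (\<forall>c\<in>{1..d}. (\<Sum>t\<in>T. x t * upd t c) \<ge> 0) \<and>
     (\<forall>t\<in>T. x t \<ge> 0) \<and>
     (\<forall>p\<in>Q. (\<Sum>t\<in>Out T p. x t) = (\<Sum>t\<in>In T p. x t)) \<and>
     (\<forall>p\<in>Qp. \<forall>t\<in>Out T p. of_int (x t) = P t * of_int (\<Sum>t'\<in>Out T p. x t'))"

definition max_sol_I ::
  "nat \<Rightarrow> 'q set \<Rightarrow> 'q set \<Rightarrow> 'q trans set \<Rightarrow> ('q trans \<Rightarrow> rat) \<Rightarrow> ('q trans \<Rightarrow> int) \<Rightarrow> bool" where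
  "max_sol_I d Q Qp T P x \<longleftrightarrow>
     sol_I d Q Qp T P x \<and>
     (\<forall>c\<in>{1..d}. (\<exists>x'. sol_I d Q Qp T P x' \<and> (\<Sum>t\<in>T. x' t * upd t c) > 0)
                   \<longrightarrow> (\<Sum>t\<in>T. x t * upd t c) > 0) \<and>
     (\<forall>t\<in>T. (\<exists>x'. sol_I d Q Qp T P x' \<and> x' t > 0) \<longrightarrow> x t > 0)"

definition eff :: "nat \<Rightarrow> (nat \<Rightarrow> int) \<Rightarrow> ('q \<Rightarrow> int) \<Rightarrow> 'q trans \<Rightarrow> int" where
  "eff d y z t = z (tgt t) - z (src t) + (\<Sum>i=1..d. upd t i * y i)"

definition prob_eff ::
  "nat \<Rightarrow> 'q trans set \<Rightarrow> ('q trans \<Rightarrow> rat) \<Rightarrow> (nat \<Rightarrow> int) \<Rightarrow> ('q \<Rightarrow> int) \<Rightarrow> 'q \<Rightarrow> rat" where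
  "prob_eff d T P y z p = (\<Sum>t\<in>Out T p. P t * of_int (eff d y z t))"

definition sol_II ::
  "nat \<Rightarrow> 'q set \<Rightarrow> 'q set \<Rightarrow> 'q set \<Rightarrow> 'q trans set \<Rightarrow> ('q trans \<Rightarrow> rat)
   \<Rightarrow> (nat \<Rightarrow> int) \<Rightarrow> ('q \<Rightarrow> int) \<Rightarrow> bool" where
  "sol_II d Q Qn Qp T P y z \<longleftrightarrow>
     (\<forall>c\<in>{1..d}. y c \<ge> 0) \<and> (\<forall>q\<in>Q. z q \<ge> 0) \<and>
     (\<forall>t\<in>T. src t \<in> Qn \<longrightarrow> eff d y z t \<le> 0) \<and>
     (\<forall>p\<in>Qp. prob_eff d T P y z p \<le> 0)"

definition max_sol_II ::
  "nat \<Rightarrow> 'q set \<Rightarrow> 'q set \<Rightarrow> 'q set \<Rightarrow> 'q trans set \<Rightarrow> ('q trans \<Rightarrow> rat)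
   \<Rightarrow> (nat \<Rightarrow> int) \<Rightarrow> ('q \<Rightarrow> int) \<Rightarrow> bool" where
  "max_sol_II d Q Qn Qp T P y z \<longleftrightarrow>
     sol_II d Q Qn Qp T P y z \<and>
     (\<forall>c\<in>{1..d}. (\<exists>y' z'. sol_II d Q Qn Qp T P y' z' \<and> y' c > 0) \<longrightarrow> y c > 0) \<and>
     (\<forall>t\<in>T. src t \<in> Qn \<longrightarrow>
        (\<exists>y' z'. sol_II d Q Qn Qp T P y' z' \<and> eff d y' z' t < 0) \<longrightarrow> eff d y z t < 0) \<and>
     (\<forall>p\<in>Qp. (\<exists>y' z'. sol_II d Q Qn Qp T P y' z' \<and> prob_eff d T P y' z' p < 0)
        \<longrightarrow> prob_eff d T P y z p < 0)"

end

theory Submission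
  imports Defs
begin

text \<open>Systems (I) and (II) are dual homogeneous linear systems. Read (II) as linear
  inequalities in the unknowns (y, z), one row per counter (y(c) \<ge> 0), per nondeterministic
  transition and per probabilistic state. A nonnegative combination of these rows that vanishes
  is, after distributing the multiplier of a probabilistic state over its outgoing transitions
  according to P, exactly a rational solution of (I), and the multiplier of each row is the
  quantity in the matching objective of (I). By a Farkas-type alternative, for each row either
  some solution of (II) satisfies it strictly or some solution of (I) has a positive multiplier
  on it; clearing denominators gives integer solutions, and a maximal solution is strict
  wherever some solution is.\<close>

section \<open>A Farkas alternative over ordered fields\<close>

definition dotp :: "'v set \<Rightarrow> ('v \<Rightarrow> 'a::comm_semiring_0) \<Rightarrow> ('v \<Rightarrow> 'a) \<Rightarrow> 'a" where
  "dotp V a w = (\<Sum>j\<in>V. a j * w j)"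

lemma dotp_diff_left:
  fixes u :: "'v \<Rightarrow> 'a::comm_ring"
  shows "dotp V (\<lambda>j. r * u j - s * w j) v = r * dotp V u v - s * dotp V w v"
  unfolding dotp_def by (simp add: left_diff_distrib sum_subtractf sum_distrib_left mult.assoc)

lemma dotp_diff_right:
  fixes u :: "'v \<Rightarrow> 'a::comm_ring"
  shows "dotp V u (\<lambda>j. r * v j - s * w j) = r * dotp V u v - s * dotp V u w"
  unfolding dotp_def by (simp add: right_diff_distrib sum_subtractf sum_distrib_left mult.left_commute)

definition in_cone :: "'v set \<Rightarrow> 'i set \<Rightarrow> ('i \<Rightarrow> 'v \<Rightarrow> 'a::linordered_idom) \<Rightarrow> ('v \<Rightarrow> 'a) \<Rightarrow> bool" where
  "in_cone V I a b \<longleftrightarrow> (\<exists>l. (\<forall>i\<in>I. l i \<ge> 0) \<and> (\<forall>j\<in>V. b j = (\<Sum>i\<in>I. l i * a i j)))"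

definition separates ::
  "'v set \<Rightarrow> 'i set \<Rightarrow> ('i \<Rightarrow> 'v \<Rightarrow> 'a::linordered_idom) \<Rightarrow> ('v \<Rightarrow> 'a) \<Rightarrow> ('v \<Rightarrow> 'a) \<Rightarrow> bool" where
  "separates V I a b y \<longleftrightarrow> (\<forall>i\<in>I. dotp V (a i) y \<le> 0) \<and> dotp V b y > 0"

lemma in_cone_insert:
  assumes "finite I" "k \<notin> I" "in_cone V I a b"
  shows "in_cone V (insert k I) a b"
proof -
  obtain l where l: "\<forall>i\<in>I. l i \<ge> 0" "\<forall>j\<in>V. b j = (\<Sum>i\<in>I. l i * a i j)"
    using assms(3) unfolding in_cone_def by blast
  have "(\<Sum>i\<in>insert k I. (l(k:=0)) i * a i j) = (\<Sum>i\<in>I. l i * a i j)" for j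
    using assms(1,2) by (auto intro: sum.cong)
  then show ?thesis
    unfolding in_cone_def using l by (intro exI[of _ "l(k:=0)"]) auto
qed

text \<open>Induction step of the Farkas lemma: if y separates b from the cone over I but
  \<alpha> = a k \<bullet> y > 0, recurse on the projections \<alpha> a i - (a i \<bullet> y) a k and
  \<alpha> b - (b \<bullet> y) a k, which are orthogonal to y; the next two lemmas lift either outcome
  back to insert k I.\<close>

lemma in_cone_lift:
  fixes a :: "'i \<Rightarrow> 'v \<Rightarrow> 'a::linordered_field"
  assumes "finite I" "k \<notin> I" "\<alpha> > 0"
    and y: "\<forall>i\<in>I. dotp V (a i) y \<le> 0" "dotp V b y \<ge> 0"
    and cone: "in_cone V I (\<lambda>i j. \<alpha> * a i j - dotp V (a i) y * a k j)
                            (\<lambda>j. \<alpha> * b j - dotp V b y * a k j)"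
  shows "in_cone V (insert k I) a b"
proof -
  obtain l where l0: "\<forall>i\<in>I. l i \<ge> 0"
    and l: "\<forall>j\<in>V. \<alpha> * b j - dotp V b y * a k j = (\<Sum>i\<in>I. l i * (\<alpha> * a i j - dotp V (a i) y * a k j))"
    using cone unfolding in_cone_def by blast
  define \<gamma> where "\<gamma> = (\<Sum>i\<in>I. l i * dotp V (a i) y)"
  define c where "c = (dotp V b y - \<gamma>) / \<alpha>"
  have "\<gamma> \<le> 0"
    unfolding \<gamma>_def by (rule sum_nonpos) (use l0 y in \<open>auto intro: mult_nonneg_nonpos\<close>)
  then have "c \<ge> 0" unfolding c_def using assms(3) y(2) by simp
  moreover have "b j = (\<Sum>i\<in>insert k I. (l(k:=c)) i * a i j)" if "j \<in> V" for j
  proof -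
    have "(\<Sum>i\<in>I. l i * (\<alpha> * a i j - dotp V (a i) y * a k j)) = \<alpha> * (\<Sum>i\<in>I. l i * a i j) - \<gamma> * a k j"
      unfolding \<gamma>_def
      by (simp add: right_diff_distrib sum_subtractf sum_distrib_left sum_distrib_right mult_ac)
    with l that have "\<alpha> * b j - dotp V b y * a k j = \<alpha> * (\<Sum>i\<in>I. l i * a i j) - \<gamma> * a k j"
      by simp
    then have "b j = c * a k j + (\<Sum>i\<in>I. l i * a i j)"
      unfolding c_def using assms(3) by (simp add: field_simps)
    moreover have "(\<Sum>i\<in>I. (l(k:=c)) i * a i j) = (\<Sum>i\<in>I. l i * a i j)"
      using assms(2) by (auto intro: sum.cong)
    ultimately show ?thesis using assms(1,2) by simp
  qed
  ultimately show ?thesis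
    unfolding in_cone_def using l0 by (intro exI[of _ "l(k:=c)"]) auto
qed

lemma separates_lift:
  fixes a :: "'i \<Rightarrow> 'v \<Rightarrow> 'a::linordered_field"
  assumes "\<alpha> = dotp V (a k) y"
    and sep: "separates V I (\<lambda>i j. \<alpha> * a i j - dotp V (a i) y * a k j)
                            (\<lambda>j. \<alpha> * b j - dotp V b y * a k j) y'"
  shows "separates V (insert k I) a b (\<lambda>j. \<alpha> * y' j - dotp V (a k) y' * y j)"
proof -
  have lift: "dotp V w (\<lambda>j. \<alpha> * y' j - dotp V (a k) y' * y j)
      = dotp V (\<lambda>j. \<alpha> * w j - dotp V w y * a k j) y'" for w
    unfolding dotp_diff_left dotp_diff_right by (simp add: algebra_simps)
  have "dotp V (\<lambda>j. \<alpha> * a k j - dotp V (a k) y * a k j) y' = 0"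
    unfolding dotp_diff_left \<open>\<alpha> = dotp V (a k) y\<close> by simp
  with sep show ?thesis
    unfolding separates_def lift by auto
qed

lemma farkas_lemma_empty:
  fixes b :: "'v \<Rightarrow> 'a::linordered_field"
  assumes "finite V"
  shows "in_cone V {} a b \<or> (\<exists>y. separates V {} a b y)"
proof (cases "\<forall>j\<in>V. b j = 0")
  case True
  then show ?thesis unfolding in_cone_def by auto
next
  case False
  then obtain j0 where "j0 \<in> V" "b j0 \<noteq> 0" by auto
  then have "dotp V b b > 0"
    unfolding dotp_def by (intro sum_pos2[OF assms]) (auto simp: zero_less_mult_iff)
  then show ?thesis unfolding separates_def by auto
qed

theorem farkas_lemma:
  fixes a :: "'i \<Rightarrow> 'v \<Rightarrow> 'a::linordered_field"
  assumes "finite V" "finite I"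
  shows "in_cone V I a b \<or> (\<exists>y. separates V I a b y)"
  using assms(2)
proof (induction I arbitrary: a b rule: finite_induct)
  case empty
  show ?case using farkas_lemma_empty[OF assms(1)] .
next
  case (insert k I)
  show ?case
  proof (cases "in_cone V I a b")
    case True
    with insert.hyps show ?thesis by (simp add: in_cone_insert)
  next
    case False
    with insert.IH obtain y where y: "separates V I a b y" by blast
    show ?thesis
    proof (cases "dotp V (a k) y \<le> 0")
      case True
      with y have "separates V (insert k I) a b y" unfolding separates_def by simp
      then show ?thesis by blast
    next
      case False
      define \<alpha> where "\<alpha> = dotp V (a k) y"
      have "\<alpha> > 0" using False \<alpha>_def by simp
      from insert.IH[of "\<lambda>i j. \<alpha> * a i j - dotp V (a i) y * a k j" "\<lambda>j. \<alpha> * b j - dotp V b y * a k j"]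
      show ?thesis
      proof
        assume cone: "in_cone V I (\<lambda>i j. \<alpha> * a i j - dotp V (a i) y * a k j) (\<lambda>j. \<alpha> * b j - dotp V b y * a k j)"
        have "\<forall>i\<in>I. dotp V (a i) y \<le> 0" "dotp V b y \<ge> 0"
          using y unfolding separates_def by auto
        then have "in_cone V (insert k I) a b"
          using cone by (rule in_cone_lift[OF insert.hyps \<open>\<alpha> > 0\<close>])
        then show ?thesis ..
      next
        assume "\<exists>y'. separates V I (\<lambda>i j. \<alpha> * a i j - dotp V (a i) y * a k j) (\<lambda>j. \<alpha> * b j - dotp V b y * a k j) y'"
        then obtain y' where "separates V I (\<lambda>i j. \<alpha> * a i j - dotp V (a i) y * a k j) (\<lambda>j. \<alpha> * b j - dotp V b y * a k j) y'" ..
        then have "separates V (insert k I) a b (\<lambda>j. \<alpha> * y' j - dotp V (a k) y' * y j)"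
          by (rule separates_lift[where a = a and k = k, OF \<alpha>_def])
        then show ?thesis by blast
      qed
    qed
  qed
qed

lemma farkas_strict_alternative:
  fixes g :: "'i \<Rightarrow> 'v \<Rightarrow> 'a::linordered_field"
  assumes "finite V" "finite I" "k \<in> I"
  shows "(\<exists>v. (\<forall>i\<in>I. dotp V (g i) v \<le> 0) \<and> dotp V (g k) v < 0) \<or>
         (\<exists>\<mu>. (\<forall>i\<in>I. \<mu> i \<ge> 0) \<and> \<mu> k > 0 \<and> (\<forall>j\<in>V. (\<Sum>i\<in>I. \<mu> i * g i j) = 0))"
  using farkas_lemma[OF assms(1,2), of g "\<lambda>j. - g k j"]
proof
  assume "in_cone V I g (\<lambda>j. - g k j)"
  then obtain l where l0: "\<forall>i\<in>I. l i \<ge> 0" and l: "\<forall>j\<in>V. - g k j = (\<Sum>i\<in>I. l i * g i j)"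
    unfolding in_cone_def by blast
  define \<mu> where "\<mu> = l(k := l k + 1)"
  have sum_\<mu>: "(\<Sum>i\<in>I. \<mu> i * g i j) = (\<Sum>i\<in>I. l i * g i j) + g k j" for j
  proof -
    have "(\<Sum>i\<in>I. \<mu> i * g i j) = \<mu> k * g k j + (\<Sum>i\<in>I - {k}. l i * g i j)"
      unfolding \<mu>_def using assms(2,3) by (simp add: sum.remove)
    also have "\<dots> = (\<Sum>i\<in>I. l i * g i j) + g k j"
      unfolding \<mu>_def using assms(2,3) by (simp add: sum.remove algebra_simps)
    finally show ?thesis .
  qed
  have "\<forall>j\<in>V. (\<Sum>i\<in>I. \<mu> i * g i j) = 0"
  proof
    fix j assume "j \<in> V"
    with l have "- g k j = (\<Sum>i\<in>I. l i * g i j)" by blast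
    then show "(\<Sum>i\<in>I. \<mu> i * g i j) = 0" unfolding sum_\<mu> by simp
  qed
  moreover have "\<forall>i\<in>I. \<mu> i \<ge> 0" "\<mu> k > 0"
    using l0 assms(3) unfolding \<mu>_def by (auto simp: add_nonneg_pos)
  ultimately show ?thesis by blast
next
  assume "\<exists>y. separates V I g (\<lambda>j. - g k j) y"
  moreover have "dotp V (\<lambda>j. - g k j) y = - dotp V (g k) y" for y
    unfolding dotp_def by (simp add: sum_negf)
  ultimately show ?thesis unfolding separates_def by auto
qed

section \<open>Clearing denominators\<close>

lemma rat_common_denominator:
  fixes v :: "'v \<Rightarrow> rat"
  assumes "finite V"
  obtains D :: int and f :: "'v \<Rightarrow> int" where "D > 0" "\<forall>j\<in>V. of_int D * v j = of_int (f j)"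
proof -
  have "\<exists>D::int. D > 0 \<and> (\<forall>j\<in>V. \<exists>n::int. of_int D * v j = of_int n)"
    using assms
  proof (induction V rule: finite_induct)
    case empty
    show ?case by (intro exI[of _ 1]) auto
  next
    case (insert j V)
    then obtain D where D: "D > 0" "\<forall>i\<in>V. \<exists>n::int. of_int D * v i = of_int n" by blast
    obtain a b where ab: "quotient_of (v j) = (a, b)" by (cases "quotient_of (v j)")
    have b: "b > 0" and vj: "v j = of_int a / of_int b"
      using quotient_of_denom_pos[OF ab] quotient_of_div[OF ab] by auto
    have "\<exists>n::int. of_int (D * b) * v i = of_int n" if i: "i \<in> insert j V" for i
    proof (cases "i = j")
      case True
      then show ?thesis using b vj by (intro exI[of _ "D * a"]) simp
    next
      case False
      then obtain n where "of_int D * v i = of_int n" using D i by auto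
      then show ?thesis by (intro exI[of _ "b * n"]) (simp add: algebra_simps)
    qed
    then show ?case using D b by (intro exI[of _ "D * b"]) auto
  qed
  then obtain D where "D > 0" "\<forall>j\<in>V. \<exists>n::int. of_int D * v j = of_int n" by blast
  with that show ?thesis by (metis bchoice)
qed

section \<open>Systems (I) and (II) as a pair of dual linear systems\<close>

definition trans_row :: "'q trans \<Rightarrow> nat + 'q \<Rightarrow> rat" where
  "trans_row t j = (case j of Inl i \<Rightarrow> of_int (upd t i)
     | Inr q \<Rightarrow> (if q = tgt t then 1 else 0) - (if q = src t then 1 else 0))"

definition state_row :: "'q trans set \<Rightarrow> ('q trans \<Rightarrow> rat) \<Rightarrow> 'q \<Rightarrow> nat + 'q \<Rightarrow> rat" where
  "state_row T P p j = (\<Sum>t\<in>Out T p. P t * trans_row t j)"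

text \<open>Unknowns of (II): Inl i stands for y(i) and Inr q for z(q). Rows: Inl c encodes
  -y(c) \<le> 0, Inr (Inl t) the constraint of a nondeterministic transition t, Inr (Inr p) that
  of a probabilistic state p.\<close>

definition lp_row ::
  "'q trans set \<Rightarrow> ('q trans \<Rightarrow> rat) \<Rightarrow> nat + ('q trans + 'q) \<Rightarrow> nat + 'q \<Rightarrow> rat" where
  "lp_row T P k j = (case k of Inl c \<Rightarrow> (if j = Inl c then -1 else 0)
     | Inr (Inl t) \<Rightarrow> trans_row t j | Inr (Inr p) \<Rightarrow> state_row T P p j)"

definition lp_vars :: "nat \<Rightarrow> 'q set \<Rightarrow> (nat + 'q) set" where
  "lp_vars d Q = {1..d} <+> Q"

definition lp_rows :: "nat \<Rightarrow> 'q set \<Rightarrow> 'q set \<Rightarrow> 'q trans set \<Rightarrow> (nat + ('q trans + 'q)) set" where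
  "lp_rows d Qn Qp T = {1..d} <+> ({t \<in> T. src t \<in> Qn} <+> Qp)"

text \<open>Left-hand side of row k of (II) at (y, z), negated for counter rows, so that the
  constraints of (II) read \<open>\<le> 0\<close> and its objectives \<open>< 0\<close>.\<close>

definition constraint_II ::
  "nat \<Rightarrow> 'q trans set \<Rightarrow> ('q trans \<Rightarrow> rat) \<Rightarrow> nat + ('q trans + 'q)
   \<Rightarrow> (nat \<Rightarrow> int) \<Rightarrow> ('q \<Rightarrow> int) \<Rightarrow> rat" where
  "constraint_II d T P k y z = (case k of Inl c \<Rightarrow> - of_int (y c)
     | Inr (Inl t) \<Rightarrow> of_int (eff d y z t) | Inr (Inr p) \<Rightarrow> prob_eff d T P y z p)"

definition objective_I :: "'q trans set \<Rightarrow> nat + ('q trans + 'q) \<Rightarrow> ('q trans \<Rightarrow> int) \<Rightarrow> bool" where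
  "objective_I T k x = (case k of Inl c \<Rightarrow> (\<Sum>t\<in>T. x t * upd t c) > 0
     | Inr (Inl t) \<Rightarrow> x t > 0 | Inr (Inr p) \<Rightarrow> (\<forall>t\<in>Out T p. x t > 0))"

lemma ball_Plus_iff: "(\<forall>k\<in>A <+> B. R k) \<longleftrightarrow> (\<forall>a\<in>A. R (Inl a)) \<and> (\<forall>b\<in>B. R (Inr b))"
  by blast

lemma dotp_trans_row:
  assumes "finite Q" "src t \<in> Q" "tgt t \<in> Q"
  shows "dotp (lp_vars d Q) (trans_row t) v
    = v (Inr (tgt t)) - v (Inr (src t)) + (\<Sum>i=1..d. of_int (upd t i) * v (Inl i))"
proof -
  have "(\<Sum>q\<in>Q. ((if q = tgt t then 1 else 0) - (if q = src t then 1 else 0)) * v (Inr q))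
      = (\<Sum>q\<in>Q. (if q = tgt t then v (Inr q) else 0) - (if q = src t then v (Inr q) else 0))"
    by (rule sum.cong) auto
  also have "\<dots> = v (Inr (tgt t)) - v (Inr (src t))"
    using assms by (simp add: sum_subtractf sum.delta')
  finally show ?thesis
    unfolding dotp_def lp_vars_def using assms(1)
    by (simp add: sum.Plus trans_row_def)
qed

lemma dotp_state_row:
  "dotp V (state_row T P p) v = (\<Sum>t\<in>Out T p. P t * dotp V (trans_row t) v)"
  unfolding dotp_def state_row_def
  by (simp add: sum_distrib_right sum_distrib_left mult.assoc sum.swap[of _ V])

lemma eff_scaled:
  assumes "finite Q" "src t \<in> Q" "tgt t \<in> Q"
    and f: "\<forall>j\<in>lp_vars d Q. of_int D * v j = of_int (f j)"
  shows "of_int (eff d (\<lambda>i. f (Inl i)) (\<lambda>q. f (Inr q) + M) t)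
    = of_int D * dotp (lp_vars d Q) (trans_row t) v"
proof -
  have f_Inl: "of_int (f (Inl i)) = of_int D * v (Inl i)" if "i \<in> {1..d}" for i
    using f that unfolding lp_vars_def ball_Plus_iff by simp
  have f_Inr: "of_int (f (Inr q)) = of_int D * v (Inr q)" if "q \<in> Q" for q
    using f that unfolding lp_vars_def ball_Plus_iff by simp
  have "(of_int (\<Sum>i=1..d. upd t i * f (Inl i)) :: rat)
      = (\<Sum>i=1..d. of_int (upd t i) * (of_int D * v (Inl i)))"
    unfolding of_int_sum by (intro sum.cong) (simp_all add: f_Inl)
  also have "\<dots> = of_int D * (\<Sum>i=1..d. of_int (upd t i) * v (Inl i))"
    by (simp add: sum_distrib_left mult.left_commute)
  finally show ?thesis
    unfolding eff_def dotp_trans_row[OF assms(1-3)]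
    using f_Inr[OF assms(2)] f_Inr[OF assms(3)] by (simp add: algebra_simps)
qed

lemma prob_eff_scaled:
  assumes "finite Q" "\<forall>t\<in>Out T p. src t \<in> Q \<and> tgt t \<in> Q"
    and f: "\<forall>j\<in>lp_vars d Q. of_int D * v j = of_int (f j)"
  shows "prob_eff d T P (\<lambda>i. f (Inl i)) (\<lambda>q. f (Inr q) + M) p
    = of_int D * dotp (lp_vars d Q) (state_row T P p) v"
  unfolding prob_eff_def dotp_state_row sum_distrib_left
  using eff_scaled[OF assms(1) _ _ f] assms(2) by (intro sum.cong) (simp_all add: mult.left_commute)

lemma sol_I_of_multiple:
  fixes r :: "'q trans \<Rightarrow> rat"
  assumes D: "D > 0" and x: "\<And>t. t \<in> T \<Longrightarrow> of_int (x t) = of_int D * r t"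
    and counters: "\<forall>c\<in>{1..d}. (\<Sum>t\<in>T. r t * of_int (upd t c)) \<ge> 0"
    and nonneg: "\<forall>t\<in>T. r t \<ge> 0"
    and conservation: "\<forall>p\<in>Q. (\<Sum>t\<in>Out T p. r t) = (\<Sum>t\<in>In T p. r t)"
    and ratios: "\<forall>p\<in>Qp. \<forall>t\<in>Out T p. r t = P t * (\<Sum>t'\<in>Out T p. r t')"
  shows "sol_I d Q Qp T P x"
  unfolding sol_I_def
proof (intro conjI ballI)
  have x_sum: "of_int (\<Sum>t\<in>S. x t) = of_int D * (\<Sum>t\<in>S. r t)" if "S \<subseteq> T" for S
    unfolding of_int_sum sum_distrib_left using that by (intro sum.cong) (auto simp: x)
  have Out_sub: "Out T p \<subseteq> T" and In_sub: "In T p \<subseteq> T" for p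
    unfolding Out_def In_def by auto
  {
    fix c assume "c \<in> {1..d}"
    have "of_int (\<Sum>t\<in>T. x t * upd t c) = of_int D * (\<Sum>t\<in>T. r t * of_int (upd t c))"
      unfolding of_int_sum sum_distrib_left by (intro sum.cong) (simp_all add: x)
    with \<open>c \<in> {1..d}\<close> have "(of_int (\<Sum>t\<in>T. x t * upd t c) :: rat) \<ge> 0"
      using D counters by simp
    then show "(\<Sum>t\<in>T. x t * upd t c) \<ge> 0" by (metis of_int_0_le_iff)
  next
    fix t assume "t \<in> T"
    then have "(of_int (x t) :: rat) \<ge> 0" using D nonneg by (simp add: x)
    then show "x t \<ge> 0" by simp
  next
    fix p assume "p \<in> Q"
    then have "(of_int (\<Sum>t\<in>Out T p. x t) :: rat) = of_int (\<Sum>t\<in>In T p. x t)"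
      using conservation x_sum[OF Out_sub] x_sum[OF In_sub] by simp
    then show "(\<Sum>t\<in>Out T p. x t) = (\<Sum>t\<in>In T p. x t)" by (metis of_int_eq_iff)
  next
    fix p t assume "p \<in> Qp" "t \<in> Out T p"
    then have rt: "r t = P t * (\<Sum>t'\<in>Out T p. r t')" and "t \<in> T"
      using ratios Out_sub by blast+
    have "(of_int (x t) :: rat) = of_int D * r t"
      using \<open>t \<in> T\<close> by (rule x)
    also have "\<dots> = of_int D * (P t * (\<Sum>t'\<in>Out T p. r t'))"
      by (subst rt) (rule refl)
    also have "\<dots> = P t * of_int (\<Sum>t'\<in>Out T p. x t')"
      unfolding x_sum[OF Out_sub] by simp
    finally show "of_int (x t) = P t * of_int (\<Sum>t'\<in>Out T p. x t')" .
  }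
qed

lemma sol_I_of_rational:
  fixes r :: "'q trans \<Rightarrow> rat"
  assumes "finite T"
    and "\<forall>c\<in>{1..d}. (\<Sum>t\<in>T. r t * of_int (upd t c)) \<ge> 0"
    and "\<forall>t\<in>T. r t \<ge> 0"
    and "\<forall>p\<in>Q. (\<Sum>t\<in>Out T p. r t) = (\<Sum>t\<in>In T p. r t)"
    and "\<forall>p\<in>Qp. \<forall>t\<in>Out T p. r t = P t * (\<Sum>t'\<in>Out T p. r t')"
  obtains x where "sol_I d Q Qp T P x" "\<forall>t\<in>T. x t > 0 \<longleftrightarrow> r t > 0"
    "\<forall>c. (\<Sum>t\<in>T. x t * upd t c) > 0 \<longleftrightarrow> (\<Sum>t\<in>T. r t * of_int (upd t c)) > 0"
proof -
  obtain D x where "D > 0" and "\<forall>t\<in>T. of_int D * r t = of_int (x t)"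
    using rat_common_denominator[OF assms(1)] .
  then have D: "(of_int D :: rat) > 0" and x: "\<And>t. t \<in> T \<Longrightarrow> of_int (x t) = of_int D * r t"
    by auto
  have "sol_I d Q Qp T P x"
    using sol_I_of_multiple[OF \<open>D > 0\<close> x assms(2-5)] .
  moreover have "\<forall>t\<in>T. x t > 0 \<longleftrightarrow> r t > 0"
  proof
    fix t assume "t \<in> T"
    then have "(of_int (x t) :: rat) = of_int D * r t" by (rule x)
    then have "(of_int (x t) :: rat) > 0 \<longleftrightarrow> r t > 0" using D by (simp add: zero_less_mult_iff)
    then show "x t > 0 \<longleftrightarrow> r t > 0" by simp
  qed
  moreover have "\<forall>c. (\<Sum>t\<in>T. x t * upd t c) > 0 \<longleftrightarrow> (\<Sum>t\<in>T. r t * of_int (upd t c)) > 0"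
  proof
    fix c
    have "of_int (\<Sum>t\<in>T. x t * upd t c) = of_int D * (\<Sum>t\<in>T. r t * of_int (upd t c))"
      unfolding of_int_sum sum_distrib_left by (intro sum.cong) (simp_all add: x)
    then have "(of_int (\<Sum>t\<in>T. x t * upd t c) :: rat) > 0 \<longleftrightarrow> (\<Sum>t\<in>T. r t * of_int (upd t c)) > 0"
      using D by (simp add: zero_less_mult_iff)
    then show "(\<Sum>t\<in>T. x t * upd t c) > 0 \<longleftrightarrow> (\<Sum>t\<in>T. r t * of_int (upd t c)) > 0"
      unfolding of_int_0_less_iff .
  qed
  ultimately show ?thesis by (rule that)
qed

definition primal_flow ::
  "'q set \<Rightarrow> ('q trans \<Rightarrow> rat) \<Rightarrow> (nat + ('q trans + 'q) \<Rightarrow> rat) \<Rightarrow> 'q trans \<Rightarrow> rat" where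
  "primal_flow Qn P \<mu> t = (if src t \<in> Qn then \<mu> (Inr (Inl t)) else P t * \<mu> (Inr (Inr (src t))))"

context
  fixes d :: nat and Q Qn Qp :: "'q set" and T :: "'q trans set" and P :: "'q trans \<Rightarrow> rat"
  assumes mdp: "vass_mdp d Q Qn Qp T P"
begin

lemma vass_mdp_facts:
  shows finite_states: "finite Q" and finite_trans: "finite T"
    and states_cover: "Qn \<union> Qp = Q" and states_disjoint: "Qn \<inter> Qp = {}"
    and src_in_states: "t \<in> T \<Longrightarrow> src t \<in> Q" and tgt_in_states: "t \<in> T \<Longrightarrow> tgt t \<in> Q"
    and prob_pos: "p \<in> Qp \<Longrightarrow> t \<in> Out T p \<Longrightarrow> P t > 0"
    and prob_sum: "p \<in> Qp \<Longrightarrow> (\<Sum>t\<in>Out T p. P t) = 1"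
  using mdp unfolding vass_mdp_def by auto

lemma sol_II_iff_constraints:
  "sol_II d Q Qn Qp T P y z \<longleftrightarrow>
     (\<forall>q\<in>Q. z q \<ge> 0) \<and> (\<forall>k\<in>lp_rows d Qn Qp T. constraint_II d T P k y z \<le> 0)"
  unfolding sol_II_def lp_rows_def constraint_II_def ball_Plus_iff by auto

lemma finite_lp_vars: "finite (lp_vars d Q)"
  unfolding lp_vars_def using finite_states by simp

lemma finite_lp_rows: "finite (lp_rows d Qn Qp T)"
  unfolding lp_rows_def using finite_trans finite_states states_cover by auto

lemma dotp_lp_row_counter:
  assumes "c \<in> {1..d}"
  shows "dotp (lp_vars d Q) (lp_row T P (Inl c)) v = - v (Inl c)"
proof -
  have "dotp (lp_vars d Q) (lp_row T P (Inl c)) v = (\<Sum>j\<in>lp_vars d Q. if j = Inl c then - v j else 0)"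
    unfolding dotp_def lp_row_def by (intro sum.cong) auto
  also have "\<dots> = - v (Inl c)"
    using assms finite_lp_vars by (subst sum.delta) (auto simp: lp_vars_def)
  finally show ?thesis .
qed

lemma constraint_II_scaled:
  assumes f: "\<forall>j\<in>lp_vars d Q. of_int D * v j = of_int (f j)" and k: "k \<in> lp_rows d Qn Qp T"
  shows "constraint_II d T P k (\<lambda>i. f (Inl i)) (\<lambda>q. f (Inr q) + M)
    = of_int D * dotp (lp_vars d Q) (lp_row T P k) v"
proof -
  consider (counter) c where "c \<in> {1..d}" "k = Inl c"
    | (nondet) t where "t \<in> T" "k = Inr (Inl t)"
    | (prob) p where "k = Inr (Inr p)"
    using k unfolding lp_rows_def by blast
  then show ?thesis
  proof cases
    case counter
    then show ?thesis
      using f dotp_lp_row_counter[of c v] unfolding lp_vars_def ball_Plus_iff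
      by (simp add: constraint_II_def)
  next
    case nondet
    then show ?thesis
      unfolding constraint_II_def lp_row_def
      using eff_scaled[OF finite_states src_in_states tgt_in_states f] by simp
  next
    case prob
    have "\<forall>t\<in>Out T p. src t \<in> Q \<and> tgt t \<in> Q"
      unfolding Out_def using src_in_states tgt_in_states by auto
    with prob show ?thesis
      unfolding constraint_II_def lp_row_def
      using prob_eff_scaled[OF finite_states _ f] by simp
  qed
qed

lemma sol_II_of_dual:
  assumes v: "\<forall>k\<in>lp_rows d Qn Qp T. dotp (lp_vars d Q) (lp_row T P k) v \<le> 0"
  obtains y z where "sol_II d Q Qn Qp T P y z"
    "\<forall>k\<in>lp_rows d Qn Qp T. dotp (lp_vars d Q) (lp_row T P k) v < 0 \<longrightarrow> constraint_II d T P k y z < 0"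
proof -
  obtain D f where "D > 0" and f: "\<forall>j\<in>lp_vars d Q. of_int D * v j = of_int (f j)"
    using rat_common_denominator[OF finite_lp_vars] .
  then have D: "(of_int D :: rat) > 0" by simp
  \<comment> \<open>a constant shift of z leaves every eff unchanged and makes z nonnegative\<close>
  define M where "M = (\<Sum>q\<in>Q. \<bar>f (Inr q)\<bar>)"
  define y where "y = (\<lambda>i. f (Inl i))"
  define z where "z = (\<lambda>q. f (Inr q) + M)"
  have scaled: "constraint_II d T P k y z = of_int D * dotp (lp_vars d Q) (lp_row T P k) v"
    if "k \<in> lp_rows d Qn Qp T" for k
    unfolding y_def z_def using f that by (rule constraint_II_scaled)
  have "\<forall>q\<in>Q. z q \<ge> 0"
  proof
    fix q assume "q \<in> Q"
    then have "\<bar>f (Inr q)\<bar> \<le> M"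
      unfolding M_def by (intro member_le_sum) (use finite_states in auto)
    then show "z q \<ge> 0" unfolding z_def by simp
  qed
  with v scaled D have "sol_II d Q Qn Qp T P y z"
    unfolding sol_II_iff_constraints by (simp add: mult_nonneg_nonpos)
  moreover have "\<forall>k\<in>lp_rows d Qn Qp T. dotp (lp_vars d Q) (lp_row T P k) v < 0 \<longrightarrow> constraint_II d T P k y z < 0"
    using scaled D by (simp add: mult_pos_neg)
  ultimately show ?thesis by (rule that)
qed

lemma primal_flow_prob:
  assumes "p \<in> Qp" "t \<in> Out T p"
  shows "primal_flow Qn P \<mu> t = P t * \<mu> (Inr (Inr p))"
  using assms states_disjoint unfolding primal_flow_def Out_def by auto

lemma lp_row_combination:
  "(\<Sum>k\<in>lp_rows d Qn Qp T. \<mu> k * lp_row T P k j)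
     = (\<Sum>t\<in>T. primal_flow Qn P \<mu> t * trans_row t j)
       - (\<Sum>c\<in>{1..d}. if j = Inl c then \<mu> (Inl c) else 0)"
proof -
  define Tn where "Tn = {t \<in> T. src t \<in> Qn}"
  define Tp where "Tp = {t \<in> T. src t \<in> Qp}"
  have fin: "finite Tn" "finite Tp" "finite Qp"
    unfolding Tn_def Tp_def using finite_trans finite_states states_cover by auto
  have T_split: "T = Tn \<union> Tp" "Tn \<inter> Tp = {}"
    unfolding Tn_def Tp_def using src_in_states states_cover states_disjoint by auto
  have nondet: "(\<Sum>t\<in>Tn. \<mu> (Inr (Inl t)) * lp_row T P (Inr (Inl t)) j)
      = (\<Sum>t\<in>Tn. primal_flow Qn P \<mu> t * trans_row t j)"
    by (rule sum.cong) (auto simp: primal_flow_def Tn_def lp_row_def)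
  have "(\<Sum>p\<in>Qp. \<mu> (Inr (Inr p)) * lp_row T P (Inr (Inr p)) j)
      = (\<Sum>p\<in>Qp. \<Sum>t\<in>{t \<in> Tp. src t = p}. primal_flow Qn P \<mu> t * trans_row t j)"
  proof (rule sum.cong)
    fix p assume p: "p \<in> Qp"
    then have "{t \<in> Tp. src t = p} = Out T p" unfolding Tp_def Out_def by auto
    with p show "\<mu> (Inr (Inr p)) * lp_row T P (Inr (Inr p)) j
        = (\<Sum>t\<in>{t \<in> Tp. src t = p}. primal_flow Qn P \<mu> t * trans_row t j)"
      unfolding lp_row_def state_row_def by (simp add: primal_flow_prob sum_distrib_left mult_ac)
  qed simp
  also have "\<dots> = (\<Sum>t\<in>Tp. primal_flow Qn P \<mu> t * trans_row t j)"
    by (rule sum.group) (use fin in \<open>auto simp: Tp_def\<close>)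
  finally have prob: "(\<Sum>p\<in>Qp. \<mu> (Inr (Inr p)) * lp_row T P (Inr (Inr p)) j)
      = (\<Sum>t\<in>Tp. primal_flow Qn P \<mu> t * trans_row t j)" .
  have counter: "(\<Sum>c\<in>{1..d}. \<mu> (Inl c) * lp_row T P (Inl c) j)
      = - (\<Sum>c\<in>{1..d}. if j = Inl c then \<mu> (Inl c) else 0)"
    unfolding sum_negf[symmetric] by (rule sum.cong) (auto simp: lp_row_def)
  have "(\<Sum>t\<in>T. primal_flow Qn P \<mu> t * trans_row t j)
      = (\<Sum>t\<in>Tn. primal_flow Qn P \<mu> t * trans_row t j) + (\<Sum>t\<in>Tp. primal_flow Qn P \<mu> t * trans_row t j)"
    unfolding T_split(1) using fin(1,2) T_split(2) by (rule sum.union_disjoint)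
  moreover have "finite {t \<in> T. src t \<in> Qn}" using fin(1) unfolding Tn_def .
  ultimately show ?thesis
    unfolding lp_rows_def using fin(3)
    by (simp only: sum.Plus finite_Plus finite_atLeastAtMost o_def Tn_def[symmetric] nondet prob counter)
qed

context
  fixes \<mu> :: "nat + ('q trans + 'q) \<Rightarrow> rat"
  assumes mu_nonneg: "\<forall>k\<in>lp_rows d Qn Qp T. \<mu> k \<ge> 0"
    and mu_balance: "\<forall>j\<in>lp_vars d Q. (\<Sum>k\<in>lp_rows d Qn Qp T. \<mu> k * lp_row T P k j) = 0"
begin

lemma primal_flow_counter:
  assumes "c \<in> {1..d}"
  shows "(\<Sum>t\<in>T. primal_flow Qn P \<mu> t * of_int (upd t c)) = \<mu> (Inl c)"
proof -
  have "Inl c \<in> lp_vars d Q" using assms unfolding lp_vars_def by auto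
  with mu_balance have "(\<Sum>t\<in>T. primal_flow Qn P \<mu> t * trans_row t (Inl c))
      = (\<Sum>c'\<in>{1..d}. if Inl c = (Inl c' :: nat + 'q) then \<mu> (Inl c') else 0)"
    unfolding lp_row_combination by simp
  also have "\<dots> = \<mu> (Inl c)" using assms by (simp add: sum.delta')
  finally show ?thesis by (simp add: trans_row_def)
qed

lemma primal_flow_conservation:
  assumes "q \<in> Q"
  shows "(\<Sum>t\<in>Out T q. primal_flow Qn P \<mu> t) = (\<Sum>t\<in>In T q. primal_flow Qn P \<mu> t)"
proof -
  have "Inr q \<in> lp_vars d Q" using assms unfolding lp_vars_def by auto
  with mu_balance have "(\<Sum>t\<in>T. primal_flow Qn P \<mu> t * trans_row t (Inr q)) = 0"
    unfolding lp_row_combination by simp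
  moreover have "(\<Sum>t\<in>T. primal_flow Qn P \<mu> t * trans_row t (Inr q))
      = (\<Sum>t\<in>T. (if tgt t = q then primal_flow Qn P \<mu> t else 0)
               - (if src t = q then primal_flow Qn P \<mu> t else 0))"
    by (rule sum.cong) (auto simp: trans_row_def)
  ultimately show ?thesis
    unfolding In_def Out_def using finite_trans by (simp add: sum_subtractf sum.inter_filter)
qed

lemma primal_flow_ratio:
  assumes "p \<in> Qp" "t \<in> Out T p"
  shows "primal_flow Qn P \<mu> t = P t * (\<Sum>t'\<in>Out T p. primal_flow Qn P \<mu> t')"
proof -
  have "(\<Sum>t'\<in>Out T p. primal_flow Qn P \<mu> t') = (\<Sum>t'\<in>Out T p. P t' * \<mu> (Inr (Inr p)))"
    using assms(1) by (intro sum.cong) (simp_all add: primal_flow_prob)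
  also have "\<dots> = \<mu> (Inr (Inr p))"
    using prob_sum[OF assms(1)] by (simp flip: sum_distrib_right)
  finally show ?thesis using primal_flow_prob[OF assms] by simp
qed

lemma primal_flow_nonneg:
  assumes "t \<in> T"
  shows "primal_flow Qn P \<mu> t \<ge> 0"
proof (cases "src t \<in> Qn")
  case True
  then have "Inr (Inl t) \<in> lp_rows d Qn Qp T" using assms unfolding lp_rows_def by auto
  with True mu_nonneg show ?thesis unfolding primal_flow_def by auto
next
  case False
  then have p: "src t \<in> Qp" using src_in_states[OF assms] states_cover by auto
  then have "Inr (Inr (src t)) \<in> lp_rows d Qn Qp T" unfolding lp_rows_def by auto
  moreover have "P t > 0" using prob_pos[OF p] assms unfolding Out_def by auto
  ultimately show ?thesis using False mu_nonneg unfolding primal_flow_def by auto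
qed

lemma sol_I_of_primal:
  obtains x where "sol_I d Q Qp T P x"
    "\<forall>k\<in>lp_rows d Qn Qp T. \<mu> k > 0 \<longrightarrow> objective_I T k x"
proof -
  have "\<forall>c\<in>{1..d}. (\<Sum>t\<in>T. primal_flow Qn P \<mu> t * of_int (upd t c)) \<ge> 0"
    using mu_nonneg primal_flow_counter unfolding lp_rows_def by auto
  then obtain x where x: "sol_I d Q Qp T P x"
    and pos: "\<forall>t\<in>T. x t > 0 \<longleftrightarrow> primal_flow Qn P \<mu> t > 0"
    and counter_pos: "\<forall>c. (\<Sum>t\<in>T. x t * upd t c) > 0
        \<longleftrightarrow> (\<Sum>t\<in>T. primal_flow Qn P \<mu> t * of_int (upd t c)) > 0"
    using sol_I_of_rational[OF finite_trans, of d "primal_flow Qn P \<mu>" Q Qp P]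
      primal_flow_nonneg primal_flow_conservation primal_flow_ratio by blast
  have "objective_I T k x" if k: "k \<in> lp_rows d Qn Qp T" and \<mu>_k: "\<mu> k > 0" for k
  proof -
    consider (counter) c where "c \<in> {1..d}" "k = Inl c"
      | (nondet) t where "t \<in> T" "src t \<in> Qn" "k = Inr (Inl t)"
      | (prob) p where "p \<in> Qp" "k = Inr (Inr p)"
      using k unfolding lp_rows_def by blast
    then show ?thesis
    proof cases
      case counter
      then show ?thesis
        using \<mu>_k counter_pos primal_flow_counter unfolding objective_I_def by auto
    next
      case nondet
      then show ?thesis
        using \<mu>_k pos unfolding objective_I_def primal_flow_def by auto
    next
      case prob
      have "x t > 0" if "t \<in> Out T p" for t
      proof -
        have "t \<in> T" "P t > 0" using that prob_pos[OF prob(1)] unfolding Out_def by auto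
        then show ?thesis
          using pos \<mu>_k primal_flow_prob[OF prob(1) that] prob(2) by simp
      qed
      then show ?thesis unfolding objective_I_def prob(2) by simp
    qed
  qed
  with x show ?thesis using that by blast
qed

end

lemma objective_alternative:
  assumes "k \<in> lp_rows d Qn Qp T"
  shows "(\<exists>x. sol_I d Q Qp T P x \<and> objective_I T k x)
    \<or> (\<exists>y z. sol_II d Q Qn Qp T P y z \<and> constraint_II d T P k y z < 0)"
  using farkas_strict_alternative[OF finite_lp_vars finite_lp_rows assms, of "lp_row T P"]
proof
  assume "\<exists>v. (\<forall>i\<in>lp_rows d Qn Qp T. dotp (lp_vars d Q) (lp_row T P i) v \<le> 0)
              \<and> dotp (lp_vars d Q) (lp_row T P k) v < 0"
  then obtain v where v: "\<forall>i\<in>lp_rows d Qn Qp T. dotp (lp_vars d Q) (lp_row T P i) v \<le> 0"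
    and v_k: "dotp (lp_vars d Q) (lp_row T P k) v < 0" by blast
  from v obtain y z where "sol_II d Q Qn Qp T P y z"
    "\<forall>k\<in>lp_rows d Qn Qp T. dotp (lp_vars d Q) (lp_row T P k) v < 0 \<longrightarrow> constraint_II d T P k y z < 0"
    by (rule sol_II_of_dual)
  with assms v_k show ?thesis by blast
next
  assume "\<exists>\<mu>. (\<forall>i\<in>lp_rows d Qn Qp T. \<mu> i \<ge> 0) \<and> \<mu> k > 0
              \<and> (\<forall>j\<in>lp_vars d Q. (\<Sum>i\<in>lp_rows d Qn Qp T. \<mu> i * lp_row T P i j) = 0)"
  then obtain \<mu> where "\<forall>i\<in>lp_rows d Qn Qp T. \<mu> i \<ge> 0" "\<mu> k > 0"
    and "\<forall>j\<in>lp_vars d Q. (\<Sum>i\<in>lp_rows d Qn Qp T. \<mu> i * lp_row T P i j) = 0" by blast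
  from this(1,3) obtain x where "sol_I d Q Qp T P x" "\<forall>k\<in>lp_rows d Qn Qp T. \<mu> k > 0 \<longrightarrow> objective_I T k x"
    by (rule sol_I_of_primal)
  with assms \<open>\<mu> k > 0\<close> show ?thesis by blast
qed

lemma max_sol_I_objective:
  assumes max: "max_sol_I d Q Qp T P x" and k: "k \<in> lp_rows d Qn Qp T"
    and x': "sol_I d Q Qp T P x'" and obj: "objective_I T k x'"
  shows "objective_I T k x"
proof -
  consider (counter) c where "c \<in> {1..d}" "k = Inl c"
    | (nondet) t where "t \<in> T" "k = Inr (Inl t)"
    | (prob) p where "k = Inr (Inr p)"
    using k unfolding lp_rows_def by blast
  then show ?thesis
  proof cases
    case counter
    with obj have "(\<Sum>t\<in>T. x' t * upd t c) > 0" by (simp add: objective_I_def)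
    with counter x' max have "(\<Sum>t\<in>T. x t * upd t c) > 0" unfolding max_sol_I_def by blast
    with counter show ?thesis by (simp add: objective_I_def)
  next
    case nondet
    with obj have "x' t > 0" by (simp add: objective_I_def)
    with nondet x' max have "x t > 0" unfolding max_sol_I_def by blast
    with nondet show ?thesis by (simp add: objective_I_def)
  next
    case prob
    with obj have "\<forall>t\<in>Out T p. x' t > 0" by (simp add: objective_I_def)
    moreover have "Out T p \<subseteq> T" unfolding Out_def by auto
    ultimately have "\<forall>t\<in>Out T p. x t > 0" using x' max unfolding max_sol_I_def by blast
    with prob show ?thesis by (simp add: objective_I_def)
  qed
qed

lemma max_sol_II_constraint:
  assumes max: "max_sol_II d Q Qn Qp T P y z" and k: "k \<in> lp_rows d Qn Qp T"
    and yz': "sol_II d Q Qn Qp T P y' z'" and neg: "constraint_II d T P k y' z' < 0"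
  shows "constraint_II d T P k y z < 0"
proof -
  consider (counter) c where "c \<in> {1..d}" "k = Inl c"
    | (nondet) t where "t \<in> T" "src t \<in> Qn" "k = Inr (Inl t)"
    | (prob) p where "p \<in> Qp" "k = Inr (Inr p)"
    using k unfolding lp_rows_def by blast
  then show ?thesis
  proof cases
    case counter
    with neg have "y' c > 0" by (simp add: constraint_II_def)
    with counter yz' max have "y c > 0" unfolding max_sol_II_def by blast
    with counter show ?thesis by (simp add: constraint_II_def)
  next
    case nondet
    with neg have "eff d y' z' t < 0" by (simp add: constraint_II_def)
    with nondet yz' max have "eff d y z t < 0" unfolding max_sol_II_def by blast
    with nondet show ?thesis by (simp add: constraint_II_def)
  next
    case prob
    with neg have "prob_eff d T P y' z' p < 0" by (simp add: constraint_II_def)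
    with prob yz' max have "prob_eff d T P y z p < 0" unfolding max_sol_II_def by blast
    with prob show ?thesis by (simp add: constraint_II_def)
  qed
qed

lemma max_solutions_complementary:
  assumes "max_sol_I d Q Qp T P x" "max_sol_II d Q Qn Qp T P y z" "k \<in> lp_rows d Qn Qp T"
  shows "objective_I T k x \<or> constraint_II d T P k y z < 0"
  using objective_alternative[OF assms(3)]
    max_sol_I_objective[OF assms(1,3)] max_sol_II_constraint[OF assms(2,3)] by blast

end

theorem lemma4p2:
  fixes d :: nat and Q Qn Qp :: "'q set" and T :: "'q trans set" and P :: "'q trans \<Rightarrow> rat"
    and x :: "'q trans \<Rightarrow> int" and y :: "nat \<Rightarrow> int" and z :: "'q \<Rightarrow> int"
  assumes "vass_mdp d Q Qn Qp T P"
    and "strongly_connected Q T"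
    and "max_sol_I d Q Qp T P x"
    and "max_sol_II d Q Qn Qp T P y z"
  shows "(\<forall>c\<in>{1..d}. y c > 0 \<or> (\<Sum>t\<in>T. x t * upd t c) > 0) \<and>
         (\<forall>t\<in>T. (src t \<in> Qn \<longrightarrow> eff d y z t < 0 \<or> x t > 0) \<and>
                 (src t \<in> Qp \<longrightarrow> prob_eff d T P y z (src t) < 0 \<or> x t > 0))"
proof (intro conjI ballI impI)
  fix c assume "c \<in> {1..d}"
  then have "Inl c \<in> lp_rows d Qn Qp T" unfolding lp_rows_def by blast
  then show "y c > 0 \<or> (\<Sum>t\<in>T. x t * upd t c) > 0"
    using max_solutions_complementary[OF assms(1,3,4)]
    unfolding objective_I_def constraint_II_def by fastforce
next
  fix t assume "t \<in> T" "src t \<in> Qn"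
  then have "Inr (Inl t) \<in> lp_rows d Qn Qp T" unfolding lp_rows_def by blast
  then show "eff d y z t < 0 \<or> x t > 0"
    using max_solutions_complementary[OF assms(1,3,4)]
    unfolding objective_I_def constraint_II_def by fastforce
next
  fix t assume "t \<in> T" "src t \<in> Qp"
  then have "Inr (Inr (src t)) \<in> lp_rows d Qn Qp T" and "t \<in> Out T (src t)"
    unfolding lp_rows_def Out_def by blast+
  then show "prob_eff d T P y z (src t) < 0 \<or> x t > 0"
    using max_solutions_complementary[OF assms(1,3,4)]
    unfolding objective_I_def constraint_II_def by fastforce
qed

end
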